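(* Let $0<T\le1$ and $f\in_d A^M_T$. Let $N=\lceil f(0+)\rceil\in\mathbb N\cup\{\infty\}$ and, extending $f$ by $f(x)=0$ for $x\ge T$, define the distribution functions $$F_i(x)=\min\{(i-f(x))_+,1\}\,\mathbb I_{\{x>0\}},\qquad x\in\mathbb R,\ i=1,\dots,N.$$ If there exists a random vector $(X_1,\dots,X_N)$ with $X_i\sim F_i$ for each $i$ and $\mathbb P\big(\sum_{i=1}^N X_i\le1\big)=1$, then $f\in_d I^M_T$. In particular, $f\in_d I^M_T$ whenever $(F_1,\dots,F_N)$ is jointly mixable.
   Context: Setting: intrinsic location functionals $L$ on a shift-invariant class $H$ of period-$1$ functions (maps $L:H\times\mathcal I\to\mathbb R\cup\{\infty\}$, $\mathcal I$ the compact nondegenerate intervals, that are measurable, satisfy $L(g,I)\in I\cup\{\infty\}$, $L(g,I)=L(\theta_cg,I-c)+c$ with $\theta_cg(x)=g(x+c)$, stability under restriction: $I_2\subseteq I_1$, $L(g,I_1)\in I_2\Rightarrow L(g,I_2)=L(g,I_1)$, and consistency of existence: $I_2\subseteq I_1$, $L(g,I_2)\ne\infty\Rightarrow L(g,I_1)\ne\infty$). $L$ is first-time if it admits a representation by sets $S(g)\subseteq\mathbb R$ with $S(g)=S(\theta_cg)+c$ and shift-compatible partial orders $\preceq$ on $S(g)$ such that $L(g,I)=\infty$ if $S(g)\cap I=\emptyset$ and otherwise is the unique $\preceq$-maximal element of $S(g)\cap I$, and in which $t_1\le t_2$ implies $t_2\preceq t_1$. A periodic stationary process with period $1$ is a stationary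 process with continuous period-$1$ sample paths in $H$. $I^M_T$ is the set of all laws of $L(\mathbf X,[0,T])$ (on $[0,T]\cup\{\infty\}$), over all first-time intrinsic location functionals $L$ and all periodic stationary processes $\mathbf X$ with period $1$. $A^M_T$ is the class of probability distributions on $[0,T]\cup\{\infty\}$ that are absolutely continuous on $(0,T)$ with a càdlàg non-increasing density there. For a set $A$ of distributions, $f\in_d A$ means some $F\in A$ has density $f$ on $(0,T)$. When $N=\infty$, tuples $(x_1,\dots,x_N)$ mean sequences $(x_i)_{i\ge1}$. A tuple of distributions $(F_1,\dots,F_N)$ is jointly mixable if there is a random vector $(X_1,\dots,X_N)$ with $X_i\sim F_i$ and $\mathbb P(\sum_{i=1}^N X_i=C)=1$ for some constant $C\in\mathbb R$. *)

theory Defs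
  imports "HOL-Probability.Probability"
begin

definition shift :: "real \<Rightarrow> (real \<Rightarrow> real) \<Rightarrow> (real \<Rightarrow> real)" where
  "shift c g = (\<lambda>x. g (x + c))"

definition period1 :: "(real \<Rightarrow> real) \<Rightarrow> bool" where
  "period1 g \<longleftrightarrow> (\<forall>x. g (x + 1) = g x)"

definition shift_invariant :: "(real \<Rightarrow> real) set \<Rightarrow> bool" where
  "shift_invariant H \<longleftrightarrow> (\<forall>g\<in>H. \<forall>c. shift c g \<in> H)"

definition cyl :: "(real \<Rightarrow> real) measure" where
  "cyl = (\<Pi>\<^sub>M t\<in>(UNIV::real set). (borel :: real measure))"

definition path_space :: "(real \<Rightarrow> real) set \<Rightarrow> (real \<Rightarrow> real) measure" where
  "path_space H = restrict_space cyl H"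

text \<open>L g a b stands for L(g,[a,b]) (a < b); the value \<infinity> is the ereal infinity.\<close>
definition intrinsic_location ::
  "(real \<Rightarrow> real) set \<Rightarrow> ((real \<Rightarrow> real) \<Rightarrow> real \<Rightarrow> real \<Rightarrow> ereal) \<Rightarrow> bool" where
  "intrinsic_location H L \<longleftrightarrow>
     (\<forall>a b. a < b \<longrightarrow> (\<lambda>g. L g a b) \<in> borel_measurable (path_space H)) \<and>
     (\<forall>g\<in>H. \<forall>a b. a < b \<longrightarrow> L g a b \<in> ereal ` {a..b} \<union> {\<infinity>}) \<and>
     (\<forall>g\<in>H. \<forall>a b c. a < b \<longrightarrow> L g a b = L (shift c g) (a - c) (b - c) + ereal c) \<and>
     (\<forall>g\<in>H. \<forall>a1 b1 a2 b2. a2 < b2 \<longrightarrow> a1 \<le> a2 \<longrightarrow> b2 \<le> b1 \<longrightarrow>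
         L g a1 b1 \<in> ereal ` {a2..b2} \<longrightarrow> L g a2 b2 = L g a1 b1) \<and>
     (\<forall>g\<in>H. \<forall>a1 b1 a2 b2. a2 < b2 \<longrightarrow> a1 \<le> a2 \<longrightarrow> b2 \<le> b1 \<longrightarrow>
         L g a2 b2 \<noteq> \<infinity> \<longrightarrow> L g a1 b1 \<noteq> \<infinity>)"

definition is_maximal_in :: "real rel \<Rightarrow> real set \<Rightarrow> real \<Rightarrow> bool" where
  "is_maximal_in R A m \<longleftrightarrow> m \<in> A \<and> (\<forall>s\<in>A. (m, s) \<in> R \<longrightarrow> s = m)"

definition first_time ::
  "(real \<Rightarrow> real) set \<Rightarrow> ((real \<Rightarrow> real) \<Rightarrow> real \<Rightarrow> real \<Rightarrow> ereal) \<Rightarrow> bool" where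
  "first_time H L \<longleftrightarrow> intrinsic_location H L \<and>
     (\<exists>(S :: (real \<Rightarrow> real) \<Rightarrow> real set) (R :: (real \<Rightarrow> real) \<Rightarrow> real rel).
        (\<forall>g\<in>H. \<forall>c. S (shift c g) = (\<lambda>t. t - c) ` S g) \<and>
        (\<forall>g\<in>H. partial_order_on (S g) (R g)) \<and>
        (\<forall>g\<in>H. \<forall>c t1 t2. (t1, t2) \<in> R g \<longleftrightarrow> (t1 - c, t2 - c) \<in> R (shift c g)) \<and>
        (\<forall>g\<in>H. \<forall>a b. a < b \<longrightarrow>
            (if S g \<inter> {a..b} = {} then L g a b = \<infinity>
             else (\<exists>m. is_maximal_in (R g) (S g \<inter> {a..b}) m \<and>
                        (\<forall>m'. is_maximal_in (R g) (S g \<inter> {a..b}) m' \<longrightarrow> m' = m) \<and>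
                        L g a b = ereal m))) \<and>
        (\<forall>g\<in>H. \<forall>t1\<in>S g. \<forall>t2\<in>S g. t1 \<le> t2 \<longrightarrow> (t2, t1) \<in> R g))"

definition periodic_stationary :: "(real \<Rightarrow> real) set \<Rightarrow> (real \<Rightarrow> real) measure \<Rightarrow> bool" where
  "periodic_stationary H P \<longleftrightarrow>
     (\<forall>g\<in>H. continuous_on UNIV g \<and> period1 g) \<and> shift_invariant H \<and>
     prob_space P \<and> sets P = sets (path_space H) \<and>
     (\<forall>c. distr P P (shift c) = P)"

definition IMT :: "real \<Rightarrow> ereal measure set" where
  "IMT T = {F. \<exists>H L P. shift_invariant H \<and> (\<forall>g\<in>H. period1 g) \<and> first_time H L \<and>
                   periodic_stationary H P \<and> F = distr P borel (\<lambda>g. L g 0 T)}"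

definition distribution_on :: "real \<Rightarrow> ereal measure \<Rightarrow> bool" where
  "distribution_on T F \<longleftrightarrow> prob_space F \<and> sets F = sets (borel :: ereal measure) \<and>
     emeasure F (ereal ` {0..T} \<union> {\<infinity>}) = 1"

definition density_on :: "real \<Rightarrow> ereal measure \<Rightarrow> (real \<Rightarrow> real) \<Rightarrow> bool" where
  "density_on T F f \<longleftrightarrow> (\<forall>x\<in>{0<..<T}. 0 \<le> f x) \<and>
     (\<forall>A\<in>sets (borel :: real measure). A \<subseteq> {0<..<T} \<longrightarrow>
        emeasure F (ereal ` A) = (\<integral>\<^sup>+ x. ennreal (f x) * indicator A x \<partial>lborel))"

definition cadlag_noninc :: "real \<Rightarrow> (real \<Rightarrow> real) \<Rightarrow> bool" where
  "cadlag_noninc T f \<longleftrightarrow>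
     (\<forall>x y. 0 < x \<longrightarrow> x \<le> y \<longrightarrow> y < T \<longrightarrow> f y \<le> f x) \<and>
     (\<forall>x\<in>{0<..<T}. continuous (at_right x) f) \<and>
     (\<forall>x\<in>{0<..<T}. \<exists>l. (f \<longlongrightarrow> l) (at_left x))"

definition AMT :: "real \<Rightarrow> ereal measure set" where
  "AMT T = {F. distribution_on T F \<and> (\<exists>g. cadlag_noninc T g \<and> density_on T F g)}"

definition in_d :: "real \<Rightarrow> ereal measure set \<Rightarrow> (real \<Rightarrow> real) \<Rightarrow> bool" where
  "in_d T A f \<longleftrightarrow> (\<exists>F\<in>A. density_on T F f)"

definition f0plus :: "(real \<Rightarrow> real) \<Rightarrow> ereal" where
  "f0plus f = Lim (at_right 0) (\<lambda>x. ereal (f x))"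

definition N_of :: "(real \<Rightarrow> real) \<Rightarrow> enat" where
  "N_of f = (case f0plus f of ereal r \<Rightarrow> enat (nat \<lceil>r\<rceil>) | _ \<Rightarrow> \<infinity>)"

definition fext :: "real \<Rightarrow> (real \<Rightarrow> real) \<Rightarrow> real \<Rightarrow> real" where
  "fext T f x = (if T \<le> x then 0 else f x)"

definition Fcdf :: "real \<Rightarrow> (real \<Rightarrow> real) \<Rightarrow> nat \<Rightarrow> real \<Rightarrow> real" where
  "Fcdf T f i x = min (max (real i - fext T f x) 0) 1 * (if x > 0 then 1 else 0)"

definition rv_with_cdfs ::
  "'w measure \<Rightarrow> (nat \<Rightarrow> 'w \<Rightarrow> real) \<Rightarrow> enat \<Rightarrow> (nat \<Rightarrow> real \<Rightarrow> real) \<Rightarrow> bool" where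
  "rv_with_cdfs M X N Fs \<longleftrightarrow> prob_space M \<and>
     (\<forall>i. 1 \<le> i \<longrightarrow> enat i \<le> N \<longrightarrow>
        X i \<in> borel_measurable M \<and>
        (\<forall>x. measure M {\<omega>\<in>space M. X i \<omega> \<le> x} = Fs i x))"

definition sum_le1 :: "enat \<Rightarrow> (nat \<Rightarrow> 'w \<Rightarrow> real) \<Rightarrow> 'w \<Rightarrow> bool" where
  "sum_le1 N X \<omega> = (case N of
      enat n \<Rightarrow> (\<Sum>i=1..n. X i \<omega>) \<le> 1
    | \<infinity> \<Rightarrow> summable (\<lambda>i. X (Suc i) \<omega>) \<and> (\<Sum>i. X (Suc i) \<omega>) \<le> 1)"

definition sum_eq :: "enat \<Rightarrow> (nat \<Rightarrow> 'w \<Rightarrow> real) \<Rightarrow> 'w \<Rightarrow> real \<Rightarrow> bool" where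
  "sum_eq N X \<omega> C = (case N of
      enat n \<Rightarrow> (\<Sum>i=1..n. X i \<omega>) = C
    | \<infinity> \<Rightarrow> (\<lambda>i. X (Suc i) \<omega>) sums C)"

definition mixing_vector ::
  "'w measure \<Rightarrow> (nat \<Rightarrow> 'w \<Rightarrow> real) \<Rightarrow> enat \<Rightarrow> (nat \<Rightarrow> real \<Rightarrow> real) \<Rightarrow> bool" where
  "mixing_vector M X N Fs \<longleftrightarrow> rv_with_cdfs M X N Fs \<and>
     (\<exists>C::real. AE \<omega> in M. sum_eq N X \<omega> C)"

end

theory Submission
  imports Defs
begin

(* The location functional is the first zero of the path in the window. Given nonnegative
   X_1, X_2, ... with sum at most 1, lay them end to end from 0 as consecutive gaps
   (sigma_{j-1}, sigma_j) with sigma_j = X_1 + ... + X_j, declare the gap endpoints and the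
   leftover interval [sup sigma_j, 1] to be zeros, and take the distance to this set, extended
   1-periodically. Shifting this path by an independent uniform phase U makes it stationary.
   The first zero after time 0 is sigma_j - U when U lies in the j-th gap, and 0 otherwise, so
   its law has density t |-> sum_j P(X_j > t) on (0, T). By the choice of F_i,
   P(X_i > t) = min ((f t - (i - 1))_+, 1) slices f t into unit layers, and the sum is f t.
   For a mixing vector with constant sum C, integrating the same layers gives
   C = E (sum_i X_i) = integral of f over (0, T) <= 1. *)

section \<open>The first zero as a first-time intrinsic location functional\<close>

definition continuous_periodic :: "(real \<Rightarrow> real) set" where
  "continuous_periodic = {g. continuous_on UNIV g \<and> period1 g}"

definition zeros_within :: "(real \<Rightarrow> real) \<Rightarrow> real \<Rightarrow> real \<Rightarrow> real set" where
  "zeros_within g a b = {x\<in>{a..b}. g x = 0}"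

definition first_zero :: "(real \<Rightarrow> real) \<Rightarrow> real \<Rightarrow> real \<Rightarrow> ereal" where
  "first_zero g a b =
     (if zeros_within g a b = {} then \<infinity> else ereal (Inf (zeros_within g a b)))"

lemma shift_continuous_periodic:
  assumes "g \<in> continuous_periodic"
  shows "shift c g \<in> continuous_periodic"
proof -
  have "continuous_on UNIV (\<lambda>x. g (x + c))"
    using assms unfolding continuous_periodic_def
    by (intro continuous_on_compose2[where f = "\<lambda>x. x + c" and g = g]) (auto intro: continuous_intros)
  moreover have "g (x + 1 + c) = g (x + c)" for x
    using assms by (metis add.commute add.left_commute continuous_periodic_def mem_Collect_eq period1_def)
  ultimately show ?thesis by (simp add: continuous_periodic_def period1_def shift_def)
qed

lemma closed_zeros_within: "continuous_on UNIV g \<Longrightarrow> closed (zeros_within g a b)"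
proof -
  assume "continuous_on UNIV g"
  then have "closed (g -` {0})"
    by (intro continuous_closed_vimage) (auto simp: continuous_on_eq_continuous_at)
  moreover have "zeros_within g a b = {a..b} \<inter> g -` {0}" by (auto simp: zeros_within_def)
  ultimately show ?thesis by auto
qed

lemma Inf_zeros_within:
  assumes "continuous_on UNIV g" "zeros_within g a b \<noteq> {}"
  shows "Inf (zeros_within g a b) \<in> zeros_within g a b"
    and "x \<in> zeros_within g a b \<Longrightarrow> Inf (zeros_within g a b) \<le> x"
proof -
  have "bdd_below (zeros_within g a b)" by (auto simp: zeros_within_def bdd_below_def)
  then show "Inf (zeros_within g a b) \<in> zeros_within g a b"
    and "x \<in> zeros_within g a b \<Longrightarrow> Inf (zeros_within g a b) \<le> x"
    using closed_contains_Inf[OF assms(2) _ closed_zeros_within[OF assms(1)]] by (auto intro: cInf_lower)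
qed

lemma first_zero_eqI:
  assumes "m \<in> zeros_within g a b" "\<And>x. x \<in> zeros_within g a b \<Longrightarrow> m \<le> x"
  shows "first_zero g a b = ereal m"
proof -
  have "Inf (zeros_within g a b) = m" using assms by (intro cInf_eq_minimum) auto
  then show ?thesis using assms(1) by (auto simp: first_zero_def)
qed

lemma first_zero_eq_Inf:
  "zeros_within g a b \<noteq> {} \<Longrightarrow> first_zero g a b = ereal (Inf (zeros_within g a b))"
  by (simp add: first_zero_def)

lemma first_zero_le_iff:
  assumes "continuous_on UNIV g"
  shows "first_zero g a b \<le> ereal t \<longleftrightarrow> zeros_within g a (min t b) \<noteq> {}"
proof (cases "zeros_within g a b = {}")
  case True
  moreover have "zeros_within g a (min t b) \<subseteq> zeros_within g a b" by (auto simp: zeros_within_def)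
  ultimately show ?thesis by (auto simp: first_zero_def)
next
  case False
  note Inf = Inf_zeros_within[OF assms False]
  show ?thesis
  proof
    assume "first_zero g a b \<le> ereal t"
    then have "Inf (zeros_within g a b) \<le> t" using False by (simp add: first_zero_def)
    then have "Inf (zeros_within g a b) \<in> zeros_within g a (min t b)"
      using Inf(1) by (auto simp: zeros_within_def)
    then show "zeros_within g a (min t b) \<noteq> {}" by blast
  next
    assume "zeros_within g a (min t b) \<noteq> {}"
    then obtain x where "x \<in> zeros_within g a b" "x \<le> t" by (auto simp: zeros_within_def)
    then show "first_zero g a b \<le> ereal t" using Inf(2) False by (force simp: first_zero_def)
  qed
qed

lemma first_zero_in_interval:
  "continuous_on UNIV g \<Longrightarrow> first_zero g a b \<in> ereal ` {a..b} \<union> {\<infinity>}"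
  using Inf_zeros_within(1)[of g a b] by (auto simp: first_zero_def zeros_within_def)

lemma zeros_within_shift: "zeros_within (shift c g) (a - c) (b - c) = (\<lambda>x. x - c) ` zeros_within g a b"
proof -
  have "x \<in> zeros_within (shift c g) (a - c) (b - c) \<longleftrightarrow> x + c \<in> zeros_within g a b" for x
    by (auto simp: zeros_within_def shift_def)
  then show ?thesis by (force intro: rev_image_eqI)
qed

lemma first_zero_shift:
  assumes "continuous_on UNIV g"
  shows "first_zero g a b = first_zero (shift c g) (a - c) (b - c) + ereal c"
proof (cases "zeros_within g a b = {}")
  case True
  then show ?thesis by (simp add: first_zero_def zeros_within_shift)
next
  case False
  note Inf = Inf_zeros_within[OF assms False]
  have "first_zero (shift c g) (a - c) (b - c) = ereal (Inf (zeros_within g a b) - c)"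
    using Inf by (intro first_zero_eqI) (auto simp: zeros_within_shift)
  then show ?thesis using False by (simp add: first_zero_def)
qed

lemma first_zero_restrict:
  assumes "continuous_on UNIV g" "a1 \<le> a2" "b2 \<le> b1" "first_zero g a1 b1 \<in> ereal ` {a2..b2}"
  shows "first_zero g a2 b2 = first_zero g a1 b1"
proof -
  have ne: "zeros_within g a1 b1 \<noteq> {}" using assms(4) by (auto simp: first_zero_def)
  note Inf = Inf_zeros_within[OF assms(1) ne]
  have "Inf (zeros_within g a1 b1) \<in> {a2..b2}" using assms(4) ne by (auto simp: first_zero_def)
  then have "first_zero g a2 b2 = ereal (Inf (zeros_within g a1 b1))"
    using Inf assms(2,3) by (intro first_zero_eqI) (auto simp: zeros_within_def)
  then show ?thesis using ne by (simp add: first_zero_def)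
qed

lemma first_zero_finite_mono:
  assumes "a1 \<le> a2" "b2 \<le> b1" "first_zero g a2 b2 \<noteq> \<infinity>"
  shows "first_zero g a1 b1 \<noteq> \<infinity>"
proof -
  have "zeros_within g a2 b2 \<subseteq> zeros_within g a1 b1" using assms(1,2) by (auto simp: zeros_within_def)
  then show ?thesis using assms(3) by (auto simp: first_zero_def)
qed

lemma space_path_space: "space (path_space H) = H"
  by (simp add: path_space_def cyl_def space_restrict_space space_PiM PiE_UNIV_domain)

lemma measurable_path_space_eval: "(\<lambda>g. g t) \<in> borel_measurable (path_space H)"
  unfolding path_space_def cyl_def
  by (rule measurable_restrict_space1) (simp add: measurable_component_singleton)

lemma zeros_within_nonempty_iff_rational_approx:
  assumes g: "continuous_on UNIV g" and "a \<le> b"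
  defines "Q \<equiv> insert a (insert b (\<rat> \<inter> {a..b}))"
  shows "zeros_within g a b \<noteq> {} \<longleftrightarrow> (\<forall>n::nat. \<exists>q\<in>Q. \<bar>g q\<bar> < 1 / Suc n)"
proof
  assume "zeros_within g a b \<noteq> {}"
  then obtain x where x: "x \<in> {a..b}" "g x = 0" by (auto simp: zeros_within_def)
  show "\<forall>n::nat. \<exists>q\<in>Q. \<bar>g q\<bar> < 1 / Suc n"
  proof
    fix n :: nat
    show "\<exists>q\<in>Q. \<bar>g q\<bar> < 1 / Suc n"
    proof (cases "x = a \<or> x = b")
      case True then show ?thesis using x by (auto simp: Q_def)
    next
      case False
      have "isCont g x" using g by (simp add: continuous_on_eq_continuous_at)
      then obtain d where d: "d > 0" "\<And>y. dist y x < d \<Longrightarrow> dist (g y) (g x) < 1 / Suc n"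
        unfolding continuous_at_eps_delta by (metis of_nat_0_less_iff zero_less_Suc zero_less_divide_1_iff)
      have "max a (x - d) < min b (x + d)" using x False d(1) by auto
      then obtain q where q: "q \<in> \<rat>" "max a (x - d) < q" "q < min b (x + d)"
        using Rats_dense_in_real by blast
      then have "\<bar>g q\<bar> < 1 / Suc n" using d(2)[of q] x(2) by (auto simp: dist_real_def)
      moreover have "q \<in> Q" using q by (auto simp: Q_def)
      ultimately show ?thesis by blast
    qed
  qed
next
  assume approx: "\<forall>n::nat. \<exists>q\<in>Q. \<bar>g q\<bar> < 1 / Suc n"
  show "zeros_within g a b \<noteq> {}"
  proof
    assume no_zero: "zeros_within g a b = {}"
    have "continuous_on {a..b} (\<lambda>x. \<bar>g x\<bar>)"
      using g by (intro continuous_intros) (auto intro: continuous_on_subset)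
    then obtain x0 where x0: "x0 \<in> {a..b}" "\<And>y. y \<in> {a..b} \<Longrightarrow> \<bar>g x0\<bar> \<le> \<bar>g y\<bar>"
      using continuous_attains_inf[of "{a..b}" "\<lambda>x. \<bar>g x\<bar>"] \<open>a \<le> b\<close> by auto
    have "0 < \<bar>g x0\<bar>" using no_zero x0(1) by (auto simp: zeros_within_def)
    then obtain n where n: "inverse (Suc n) < \<bar>g x0\<bar>" using reals_Archimedean by blast
    from approx obtain q where q: "q \<in> Q" "\<bar>g q\<bar> < 1 / Suc n" by blast
    have "q \<in> {a..b}" using q(1) \<open>a \<le> b\<close> by (auto simp: Q_def)
    then show False using x0(2)[of q] q(2) n by (simp add: inverse_eq_divide)
  qed
qed

lemma sets_zeros_within_nonempty:
  assumes "\<forall>g\<in>H. continuous_on UNIV g"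
  shows "{g \<in> space (path_space H). zeros_within g a b \<noteq> {}} \<in> sets (path_space H)"
proof (cases "a \<le> b")
  case False
  then have "{g \<in> space (path_space H). zeros_within g a b \<noteq> {}} = {}" by (auto simp: zeros_within_def)
  then show ?thesis by (simp only: sets.empty_sets)
next
  case True
  define Q where "Q = insert a (insert b (\<rat> \<inter> {a..b}))"
  note measurable_path_space_eval[of _ H, measurable]
  have "countable Q" by (simp add: Q_def countable_rat)
  then have "{g \<in> space (path_space H). \<forall>n::nat. \<exists>q\<in>Q. \<bar>g q\<bar> < 1 / Suc n} \<in> sets (path_space H)"
    by measurable
  moreover have "{g \<in> space (path_space H). zeros_within g a b \<noteq> {}} =
      {g \<in> space (path_space H). \<forall>n::nat. \<exists>q\<in>Q. \<bar>g q\<bar> < 1 / Suc n}"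
    using zeros_within_nonempty_iff_rational_approx[OF _ True] assms by (auto simp: space_path_space Q_def)
  ultimately show ?thesis by simp
qed

lemma borel_measurable_first_zero:
  assumes "\<forall>g\<in>H. continuous_on UNIV g"
  shows "(\<lambda>g. first_zero g a b) \<in> borel_measurable (path_space H)"
proof (rule borel_measurableI_le)
  fix y :: ereal
  show "{g \<in> space (path_space H). first_zero g a b \<le> y} \<in> sets (path_space H)"
  proof (cases y)
    case (real t)
    then have "{g \<in> space (path_space H). first_zero g a b \<le> y} =
        {g \<in> space (path_space H). zeros_within g a (min t b) \<noteq> {}}"
      using first_zero_le_iff assms by (auto simp: space_path_space)
    then show ?thesis using sets_zeros_within_nonempty[OF assms] by simp
  next
    case PInf
    then show ?thesis by simp
  next
    case MInf
    then have "{g \<in> space (path_space H). first_zero g a b \<le> y} = {}"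
      by (auto simp: first_zero_def)
    then show ?thesis by (simp only: sets.empty_sets)
  qed
qed

lemma intrinsic_location_first_zero: "intrinsic_location continuous_periodic first_zero"
  unfolding intrinsic_location_def
  using borel_measurable_first_zero[of continuous_periodic] first_zero_in_interval
    first_zero_shift first_zero_restrict first_zero_finite_mono
  by (auto simp: continuous_periodic_def)

lemma first_time_first_zero: "first_time continuous_periodic first_zero"
proof -
  define S where "S g = {t. g t = (0::real)}" for g :: "real \<Rightarrow> real"
  \<comment> \<open>R is the reversed order on the zeros, so its maximal elements are the earliest zeros.\<close>
  define R where "R g = {(t1, t2). t1 \<in> S g \<and> t2 \<in> S g \<and> t2 \<le> t1}" for g
  have "S (shift c g) = (\<lambda>t. t - c) ` S g" for g c
  proof -
    have "t \<in> S (shift c g) \<longleftrightarrow> t + c \<in> S g" for t by (simp add: S_def shift_def)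
    then show ?thesis by (force intro: rev_image_eqI)
  qed
  moreover have "partial_order_on (S g) (R g)" for g
    by (auto simp: partial_order_on_def preorder_on_def refl_on_def trans_def antisym_def R_def)
  moreover have "(t1, t2) \<in> R g \<longleftrightarrow> (t1 - c, t2 - c) \<in> R (shift c g)" for g c t1 t2
    by (auto simp: R_def S_def shift_def)
  moreover have "if S g \<inter> {a..b} = {} then first_zero g a b = \<infinity>
      else (\<exists>m. is_maximal_in (R g) (S g \<inter> {a..b}) m \<and>
              (\<forall>m'. is_maximal_in (R g) (S g \<inter> {a..b}) m' \<longrightarrow> m' = m) \<and> first_zero g a b = ereal m)"
    if "g \<in> continuous_periodic" for g a b
  proof -
    have S_Z: "S g \<inter> {a..b} = zeros_within g a b" by (auto simp: S_def zeros_within_def)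
    have maximal_iff: "is_maximal_in (R g) (zeros_within g a b) m \<longleftrightarrow>
        m \<in> zeros_within g a b \<and> (\<forall>x\<in>zeros_within g a b. m \<le> x)" for m
      by (auto simp: is_maximal_in_def R_def S_def zeros_within_def)
    show ?thesis
    proof (cases "zeros_within g a b = {}")
      case True
      then show ?thesis unfolding S_Z by (simp add: first_zero_def)
    next
      case False
      with that have "continuous_on UNIV g" by (simp add: continuous_periodic_def)
      note Inf = Inf_zeros_within[OF this False]
      show ?thesis
        unfolding S_Z maximal_iff first_zero_eq_Inf[OF False]
        using False Inf by (metis order.antisym)
    qed
  qed
  moreover have "\<forall>t1\<in>S g. \<forall>t2\<in>S g. t1 \<le> t2 \<longrightarrow> (t2, t1) \<in> R g" for g
    by (auto simp: R_def)
  ultimately show ?thesis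
    unfolding first_time_def
    by (intro conjI intrinsic_location_first_zero exI[of _ S] exI[of _ R] ballI allI impI)
      (simp_all only:)
qed

section \<open>A periodic path with prescribed gaps between its zeros\<close>

definition psum :: "(nat \<Rightarrow> real) \<Rightarrow> nat \<Rightarrow> real" where
  "psum x n = (\<Sum>i<n. x i)"

definition gap_sequence :: "(nat \<Rightarrow> real) \<Rightarrow> bool" where
  "gap_sequence x \<longleftrightarrow> (\<forall>i. 0 \<le> x i) \<and> (\<forall>n. psum x n \<le> 1)"

definition beyond_psums :: "(nat \<Rightarrow> real) \<Rightarrow> real \<Rightarrow> bool" where
  "beyond_psums x q \<longleftrightarrow> 0 \<le> q \<and> q \<le> 1 \<and> (\<forall>n. psum x n \<le> q)"

text \<open>The closure of the zero points is the 1-periodic set generated by the partial sums of x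
  and the interval from their supremum to 1. Enumerating that interval through its rational
  points keeps the family countable, which makes the gap function measurable in x.\<close>

definition zero_point :: "(nat \<Rightarrow> real) \<Rightarrow> (nat \<times> int) + (rat \<times> int) \<Rightarrow> real" where
  "zero_point x i = (case i of
      Inl (n, k) \<Rightarrow> psum x n + of_int k
    | Inr (q, k) \<Rightarrow> (if beyond_psums x (of_rat q) then of_rat q else 0) + of_int k)"

definition zero_points :: "(nat \<Rightarrow> real) \<Rightarrow> real set" where
  "zero_points x = range (zero_point x)"

definition gap_function :: "(nat \<Rightarrow> real) \<Rightarrow> real \<Rightarrow> real" where
  "gap_function x s = infdist s (zero_points x)"

lemma psum_0 [simp]: "psum x 0 = 0"
  by (simp add: psum_def)

lemma psum_Suc: "psum x (Suc n) = psum x n + x n"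
  by (simp add: psum_def)

lemma psum_mono: "gap_sequence x \<Longrightarrow> m \<le> n \<Longrightarrow> psum x m \<le> psum x n"
  unfolding psum_def gap_sequence_def by (intro sum_mono2) auto

lemma psum_nonneg: "gap_sequence x \<Longrightarrow> 0 \<le> psum x n"
  using psum_mono[of x 0 n] by simp

lemma psum_le_1: "gap_sequence x \<Longrightarrow> psum x n \<le> 1"
  by (simp add: gap_sequence_def)

lemma psum_in_zero_points: "psum x n \<in> zero_points x"
  unfolding zero_points_def by (rule range_eqI[of _ _ "Inl (n, 0)"]) (simp add: zero_point_def)

lemma psum_in_closure_zero_points: "psum x n \<in> closure (zero_points x)"
  using closure_subset psum_in_zero_points by blast

lemma gap_function_eq_INF: "gap_function x s = (INF i. dist s (zero_point x i))"
proof -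
  have "zero_points x \<noteq> {}" by (simp add: zero_points_def)
  then show ?thesis by (simp add: gap_function_def zero_points_def infdist_def image_comp)
qed

lemma gap_function_eq_0_iff: "gap_function x s = 0 \<longleftrightarrow> s \<in> closure (zero_points x)"
  using in_closure_iff_infdist_zero[of "zero_points x"] by (simp add: gap_function_def zero_points_def)

lemma zero_point_add_int: "\<exists>j. zero_point x j = zero_point x i + of_int k"
proof (cases i)
  case (Inl a)
  then show ?thesis by (intro exI[of _ "Inl (fst a, snd a + k)"]) (auto simp: zero_point_def split: prod.splits)
next
  case (Inr a)
  then show ?thesis by (intro exI[of _ "Inr (fst a, snd a + k)"]) (auto simp: zero_point_def split: prod.splits)
qed

lemma gap_function_add_int: "gap_function x (s + of_int k) = gap_function x s"
proof -
  have incl: "range (\<lambda>i. dist (s + of_int k) (zero_point x i)) \<subseteq> range (\<lambda>i. dist s (zero_point x i))"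
    for s k
  proof
    fix d assume "d \<in> range (\<lambda>i. dist (s + of_int k) (zero_point x i))"
    then obtain i where d: "d = dist (s + of_int k) (zero_point x i)" by auto
    obtain j where "zero_point x j = zero_point x i + of_int (- k)" using zero_point_add_int by blast
    then have "d = dist s (zero_point x j)" using d by (simp add: dist_real_def algebra_simps)
    then show "d \<in> range (\<lambda>i. dist s (zero_point x i))" by auto
  qed
  have "range (\<lambda>i. dist (s + of_int k) (zero_point x i)) = range (\<lambda>i. dist s (zero_point x i))"
  proof
    show "range (\<lambda>i. dist s (zero_point x i)) \<subseteq> range (\<lambda>i. dist (s + of_int k) (zero_point x i))"
      using incl[of "s + of_int k" "- k"] by simp
  qed (rule incl)
  then show ?thesis by (simp add: gap_function_eq_INF)
qed

lemma gap_function_continuous_periodic: "gap_function x \<in> continuous_periodic"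
proof -
  have "continuous_on UNIV (gap_function x)" unfolding gap_function_def by (intro continuous_intros)
  moreover have "period1 (gap_function x)"
    unfolding period1_def using gap_function_add_int[of x _ 1] by simp
  ultimately show ?thesis by (simp add: continuous_periodic_def)
qed

lemma borel_measurable_gap_function [measurable]:
  assumes [measurable]: "\<And>j. (\<lambda>z. x z j) \<in> borel_measurable M" "s \<in> borel_measurable M"
  shows "(\<lambda>z. gap_function (x z) (s z)) \<in> borel_measurable M"
proof -
  have [measurable]: "(\<lambda>z. psum (x z) n) \<in> borel_measurable M" for n
    unfolding psum_def by measurable
  have [measurable]: "Measurable.pred M (\<lambda>z. beyond_psums (x z) q)" for q
    unfolding beyond_psums_def by measurable
  have "(\<lambda>z. zero_point (x z) i) \<in> borel_measurable M" for i
    by (cases i) (auto simp: zero_point_def split: prod.splits)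
  then have "(\<lambda>z. INF i. dist (s z) (zero_point (x z) i)) \<in> borel_measurable M"
    by (intro borel_measurable_cINF_real) (auto intro: borel_measurable_dist)
  then show ?thesis by (simp add: gap_function_eq_INF)
qed

lemma zero_points_outside_gap:
  assumes "gap_sequence x"
  shows "zero_points x \<inter> {psum x j<..<psum x (Suc j)} = {}"
proof -
  have no_translate: "v + of_int k \<notin> {psum x j<..<psum x (Suc j)}"
    if "0 \<le> v" "v \<le> 1" "v \<le> psum x j \<or> psum x (Suc j) \<le> v" for v k
  proof -
    have "0 \<le> psum x j" "psum x (Suc j) \<le> 1" using psum_nonneg psum_le_1 assms by auto
    consider "k \<ge> 1" | "k \<le> -1" | "k = 0" by linarith
    then show ?thesis
    proof cases
      case 1
      then have "real_of_int k \<ge> 1" by simp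
      then show ?thesis using that \<open>psum x (Suc j) \<le> 1\<close> by auto
    next
      case 2
      then have "real_of_int k \<le> -1" by simp
      then show ?thesis using that \<open>0 \<le> psum x j\<close> by auto
    qed (use that in auto)
  qed
  have "zero_point x i \<notin> {psum x j<..<psum x (Suc j)}" for i
  proof (cases i)
    case (Inl a)
    have "psum x (fst a) \<le> psum x j \<or> psum x (Suc j) \<le> psum x (fst a)"
      using psum_mono[OF assms, of "fst a" j] psum_mono[OF assms, of "Suc j" "fst a"] by linarith
    then show ?thesis
      using no_translate[OF psum_nonneg[OF assms] psum_le_1[OF assms]] Inl
      by (auto simp: zero_point_def split: prod.splits)
  next
    case (Inr a)
    then show ?thesis
      using no_translate[of "of_rat (fst a)"] no_translate[of 0] psum_nonneg[OF assms, of j]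
      by (auto simp: zero_point_def beyond_psums_def split: prod.splits)
  qed
  then show ?thesis by (auto simp: zero_points_def)
qed

lemma closure_zero_points_outside_gap:
  "gap_sequence x \<Longrightarrow> closure (zero_points x) \<inter> {psum x j<..<psum x (Suc j)} = {}"
  using open_Int_closure_eq_empty[of "{psum x j<..<psum x (Suc j)}"] zero_points_outside_gap
  by (metis inf_commute open_greaterThanLessThan)

lemma in_closure_zero_points_outside_gaps:
  assumes x: "gap_sequence x" and u: "0 \<le> u" "u < 1"
    and no_gap: "\<And>j. u \<notin> {psum x j<..<psum x (Suc j)}"
  shows "u \<in> closure (zero_points x)"
proof (cases "\<exists>n. u \<le> psum x n")
  case True
  define n where "n = (LEAST n. u \<le> psum x n)"
  have n: "u \<le> psum x n" using True unfolding n_def by (rule LeastI_ex)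
  have below_n: "psum x m < u" if "m < n" for m
    using not_less_Least[OF that[unfolded n_def]] by simp
  show ?thesis
  proof (cases n)
    case 0
    then have "u = psum x 0" using n u by simp
    then show ?thesis using psum_in_closure_zero_points[of x 0] by simp
  next
    case (Suc j)
    then have "psum x j < u" using below_n by simp
    then have "u = psum x n" using n no_gap[of j] Suc by auto
    then show ?thesis using psum_in_closure_zero_points by simp
  qed
next
  case False
  then have below: "psum x n < u" for n by (simp add: not_le)
  show ?thesis
    unfolding closure_approachable
  proof (intro allI impI)
    fix e :: real
    assume "0 < e"
    then obtain q where q: "q \<in> \<rat>" "u < q" "q < min (u + e) 1"
      using Rats_dense_in_real[of u "min (u + e) 1"] u by auto
    then obtain r where r: "q = of_rat r" by (auto simp: Rats_def)
    have "psum x n \<le> q" for n using below[of n] q(2) by linarith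
    then have "beyond_psums x q" using q u by (simp add: beyond_psums_def)
    then have "zero_point x (Inr (r, 0)) = q" using r by (simp add: zero_point_def)
    then have "q \<in> zero_points x" unfolding zero_points_def by (metis rangeI)
    moreover have "dist q u < e" using q by (simp add: dist_real_def)
    ultimately show "\<exists>y\<in>zero_points x. dist y u < e" by blast
  qed
qed

lemma zeros_within_shift_gap_function:
  "t \<in> zeros_within (shift u (gap_function x)) a b \<longleftrightarrow> t \<in> {a..b} \<and> t + u \<in> closure (zero_points x)"
  by (simp add: zeros_within_def shift_def gap_function_eq_0_iff)

lemma first_zero_shift_gap_function_in_gap:
  assumes x: "gap_sequence x" and u: "u \<in> {psum x j<..<psum x (Suc j)}"
  shows "first_zero (shift u (gap_function x)) 0 T =
    (if psum x (Suc j) - u \<le> T then ereal (psum x (Suc j) - u) else \<infinity>)"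
proof -
  have zero_after_gap: "psum x (Suc j) \<le> t + u" if "0 \<le> t" "t + u \<in> closure (zero_points x)" for t
  proof (rule ccontr)
    assume "\<not> psum x (Suc j) \<le> t + u"
    then show False using closure_zero_points_outside_gap[OF x, of j] that u by auto
  qed
  show ?thesis
  proof (cases "psum x (Suc j) - u \<le> T")
    case True
    have "psum x (Suc j) - u \<in> zeros_within (shift u (gap_function x)) 0 T"
      using True u psum_in_closure_zero_points by (simp add: zeros_within_shift_gap_function)
    moreover have "psum x (Suc j) - u \<le> t" if "t \<in> zeros_within (shift u (gap_function x)) 0 T" for t
      using that zero_after_gap[of t] by (auto simp: zeros_within_shift_gap_function)
    ultimately show ?thesis using True by (simp add: first_zero_eqI)
  next
    case False
    have "t \<notin> zeros_within (shift u (gap_function x)) 0 T" for t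
      using zero_after_gap[of t] False by (auto simp: zeros_within_shift_gap_function)
    then have "zeros_within (shift u (gap_function x)) 0 T = {}" by blast
    then show ?thesis using False by (simp add: first_zero_def)
  qed
qed

lemma gaps_disjoint:
  assumes x: "gap_sequence x"
    and "u \<in> {psum x i<..<psum x (Suc i)}" "u \<in> {psum x j<..<psum x (Suc j)}"
  shows "i = j"
proof (rule ccontr)
  assume "i \<noteq> j"
  then consider "Suc i \<le> j" | "Suc j \<le> i" by linarith
  then show False
    using psum_mono[OF x, of "Suc i" j] psum_mono[OF x, of "Suc j" i] assms(2,3) by cases auto
qed

lemma suminf_indicator_gap:
  assumes x: "gap_sequence x" and j0: "u \<in> {psum x j0<..<psum x (Suc j0)}"
  shows "(\<Sum>j. indicator {psum x j<..<psum x (Suc j)} u * h j) = (h j0 :: ennreal)"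
proof -
  have "indicator {psum x j<..<psum x (Suc j)} u = (0 :: ennreal)" if "j \<noteq> j0" for j
    using gaps_disjoint[OF x, of u j j0] j0 that by (auto simp: indicator_def)
  then have "(\<lambda>j. indicator {psum x j<..<psum x (Suc j)} u * h j) = (\<lambda>j. if j = j0 then h j0 else 0)"
    using j0 by (auto simp: fun_eq_iff)
  moreover have "(\<lambda>j. if j = j0 then h j0 else 0) sums h j0" by (rule sums_single)
  ultimately show ?thesis by (simp add: sums_iff)
qed

lemma indicator_first_zero_shift_gap_function:
  assumes x: "gap_sequence x" and A: "A \<subseteq> {0<..<T}" and "0 \<le> T"
  shows "indicator {0..<1} u * indicator (ereal ` A) (first_zero (shift u (gap_function x)) 0 T) =
    (\<Sum>j. indicator A (psum x (Suc j) - u) * indicator {0<..<x j} (psum x (Suc j) - u) :: ennreal)"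
proof -
  define gap where "gap j = {psum x j<..<psum x (Suc j)}" for j
  have term_eq: "indicator A (psum x (Suc j) - u) * indicator {0<..<x j} (psum x (Suc j) - u) =
      (indicator (gap j) u * indicator A (psum x (Suc j) - u) :: ennreal)" for j
    by (auto simp: gap_def psum_Suc indicator_def)
  show ?thesis
  proof (cases "\<exists>j. u \<in> gap j")
    case True
    then obtain j0 where j0: "u \<in> gap j0" by blast
    have "0 \<le> u" "u < 1"
      using j0 psum_nonneg[OF x, of j0] psum_le_1[OF x, of "Suc j0"] by (auto simp: gap_def)
    moreover have "indicator (ereal ` A) (first_zero (shift u (gap_function x)) 0 T) =
        (indicator A (psum x (Suc j0) - u) :: ennreal)"
      using first_zero_shift_gap_function_in_gap[OF x j0[unfolded gap_def]] A
      by (auto simp: indicator_def image_iff)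
    moreover have "(\<Sum>j. indicator (gap j) u * indicator A (psum x (Suc j) - u)) =
        (indicator A (psum x (Suc j0) - u) :: ennreal)"
      using suminf_indicator_gap[OF x j0[unfolded gap_def]] by (simp add: gap_def)
    ultimately show ?thesis by (simp add: term_eq)
  next
    case False
    have "indicator (ereal ` A) (first_zero (shift u (gap_function x)) 0 T) = (0 :: ennreal)"
      if "0 \<le> u" "u < 1"
    proof -
      have "0 + u \<in> closure (zero_points x)"
        using in_closure_zero_points_outside_gaps[OF x that] False by (simp add: gap_def)
      with \<open>0 \<le> T\<close> have "first_zero (shift u (gap_function x)) 0 T = 0"
        unfolding zero_ereal_def by (intro first_zero_eqI) (auto simp: zeros_within_shift_gap_function)
      then show ?thesis using A by (auto simp: indicator_def)
    qed
    moreover have "(\<Sum>j. indicator (gap j) u * indicator A (psum x (Suc j) - u)) = (0 :: ennreal)"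
      using False by simp
    ultimately show ?thesis by (cases "0 \<le> u \<and> u < 1") (simp_all add: term_eq)
  qed
qed

lemma nn_integral_first_zero_shift_gap_function:
  assumes x: "gap_sequence x" and A: "A \<subseteq> {0<..<T}" "A \<in> sets borel" and "0 \<le> T"
  shows "(\<integral>\<^sup>+u. indicator {0..<1} u * indicator (ereal ` A) (first_zero (shift u (gap_function x)) 0 T) \<partial>lborel)
       = (\<integral>\<^sup>+t. indicator A t * (\<Sum>j. indicator {0<..<x j} t) \<partial>lborel)"
proof -
  let ?h = "\<lambda>j t. indicator A t * indicator {0<..<x j} t :: ennreal"
  have [measurable]: "A \<in> sets borel" by (fact A(2))
  have "(\<integral>\<^sup>+u. indicator {0..<1} u * indicator (ereal ` A) (first_zero (shift u (gap_function x)) 0 T) \<partial>lborel)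
      = (\<integral>\<^sup>+u. (\<Sum>j. ?h j (psum x (Suc j) - u)) \<partial>lborel)"
    by (simp add: indicator_first_zero_shift_gap_function[OF x A(1) \<open>0 \<le> T\<close>])
  also have "\<dots> = (\<Sum>j. \<integral>\<^sup>+u. ?h j (psum x (Suc j) - u) \<partial>lborel)"
    by (rule nn_integral_suminf) measurable
  also have "\<dots> = (\<Sum>j. \<integral>\<^sup>+t. ?h j t \<partial>lborel)"
    using nn_integral_real_affine[of "?h j" "-1" "psum x (Suc j)" for j] by simp
  also have "\<dots> = (\<integral>\<^sup>+t. (\<Sum>j. ?h j t) \<partial>lborel)"
    by (rule nn_integral_suminf[symmetric]) measurable
  finally show ?thesis by simp
qed

section \<open>Uniform phase and stationarity\<close>

definition uniform_phase :: "real measure" where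
  "uniform_phase = density lborel (indicator {0..<1})"

lemma space_uniform_phase [simp]: "space uniform_phase = UNIV"
  by (simp add: uniform_phase_def)

lemma sets_uniform_phase [simp]: "sets uniform_phase = sets borel"
  by (simp add: uniform_phase_def)

lemma prob_space_uniform_phase: "prob_space uniform_phase"
  by standard (simp add: uniform_phase_def emeasure_density)

lemma nn_integral_uniform_phase:
  "h \<in> borel_measurable borel \<Longrightarrow>
    (\<integral>\<^sup>+u. h u \<partial>uniform_phase) = (\<integral>\<^sup>+u. indicator {0..<1} u * h u \<partial>lborel)"
  unfolding uniform_phase_def by (subst nn_integral_density) auto

lemma nn_integral_indicator_translate:
  fixes h :: "real \<Rightarrow> ennreal"
  assumes [measurable]: "h \<in> borel_measurable borel"
  shows "(\<integral>\<^sup>+u. indicator {a..<b} u * h (u + r) \<partial>lborel) = (\<integral>\<^sup>+t. indicator {a + r..<b + r} t * h t \<partial>lborel)"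
  using nn_integral_real_affine[of "\<lambda>t. indicator {a + r..<b + r} t * h t" 1 r]
  by (simp add: indicator_def add.commute)

lemma nn_integral_uniform_phase_frac_add:
  assumes [measurable]: "h \<in> borel_measurable borel"
  shows "(\<integral>\<^sup>+u. h (frac (u + c)) \<partial>uniform_phase) = (\<integral>\<^sup>+u. h u \<partial>uniform_phase)"
proof -
  define r where "r = frac c"
  have r: "0 \<le> r" "r < 1" by (auto simp: r_def frac_lt_1)
  have split: "indicator {0..<1} u * h (frac (u + c)) =
      indicator {0..<1-r} u * h (u + r) + indicator {1-r..<1} u * h (u + (r - 1))" for u
  proof (cases "0 \<le> u \<and> u < 1")
    case True
    then have "frac (u + c) = (if u + r < 1 then u + r else u + r - 1)"
      using frac_add[of u c] by (simp add: r_def frac_eq)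
    then show ?thesis using True by (auto simp: indicator_def algebra_simps)
  qed (use r in \<open>auto simp: indicator_def\<close>)
  have [measurable]: "(\<lambda>x::real. frac x) \<in> borel_measurable borel"
    unfolding frac_def using borel_measurable_real_floor by measurable
  have "(\<integral>\<^sup>+u. h (frac (u + c)) \<partial>uniform_phase) =
      (\<integral>\<^sup>+u. indicator {0..<1-r} u * h (u + r) \<partial>lborel) +
      (\<integral>\<^sup>+u. indicator {1-r..<1} u * h (u + (r - 1)) \<partial>lborel)"
    by (simp add: nn_integral_uniform_phase split nn_integral_add)
  also have "\<dots> = (\<integral>\<^sup>+t. indicator {r..<1} t * h t \<partial>lborel) + (\<integral>\<^sup>+t. indicator {0..<r} t * h t \<partial>lborel)"
    by (simp add: nn_integral_indicator_translate)
  also have "\<dots> = (\<integral>\<^sup>+t. indicator {r..<1} t * h t + indicator {0..<r} t * h t \<partial>lborel)"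
    by (rule nn_integral_add[symmetric]) measurable
  also have "\<dots> = (\<integral>\<^sup>+u. h u \<partial>uniform_phase)"
    using r by (auto simp: nn_integral_uniform_phase indicator_def intro!: nn_integral_cong)
  finally show ?thesis .
qed

definition phase_shifted_path :: "('w \<Rightarrow> nat \<Rightarrow> real) \<Rightarrow> 'w \<times> real \<Rightarrow> real \<Rightarrow> real" where
  "phase_shifted_path y z = shift (snd z) (gap_function (y (fst z)))"

definition gap_process :: "'w measure \<Rightarrow> ('w \<Rightarrow> nat \<Rightarrow> real) \<Rightarrow> (real \<Rightarrow> real) measure" where
  "gap_process M y =
     distr (M \<Otimes>\<^sub>M uniform_phase) (path_space continuous_periodic) (phase_shifted_path y)"

lemma phase_shifted_path_continuous_periodic: "phase_shifted_path y z \<in> continuous_periodic"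
  by (simp add: phase_shifted_path_def shift_continuous_periodic gap_function_continuous_periodic)

lemma measurable_phase_shifted_path:
  assumes y: "\<And>j. (\<lambda>\<omega>. y \<omega> j) \<in> borel_measurable M"
  shows "phase_shifted_path y \<in> measurable (M \<Otimes>\<^sub>M uniform_phase) (path_space continuous_periodic)"
  unfolding path_space_def
proof (rule measurable_restrict_space2)
  show "phase_shifted_path y \<in> space (M \<Otimes>\<^sub>M uniform_phase) \<rightarrow> continuous_periodic"
    using phase_shifted_path_continuous_periodic by auto
  have [measurable]: "(\<lambda>z. y (fst z) j) \<in> borel_measurable (M \<Otimes>\<^sub>M uniform_phase)" for j
    by (rule measurable_compose[OF measurable_fst y])
  have [measurable]: "snd \<in> borel_measurable (M \<Otimes>\<^sub>M uniform_phase)"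
    using measurable_snd[of M uniform_phase] by (simp cong: measurable_cong_sets)
  have "(\<lambda>z s. gap_function (y (fst z)) (s + snd z)) \<in> measurable (M \<Otimes>\<^sub>M uniform_phase) cyl"
    unfolding cyl_def by (rule measurable_PiM_single') auto
  moreover have "phase_shifted_path y = (\<lambda>z s. gap_function (y (fst z)) (s + snd z))"
    by (intro ext) (simp add: phase_shifted_path_def shift_def)
  ultimately show "phase_shifted_path y \<in> measurable (M \<Otimes>\<^sub>M uniform_phase) cyl"
    by simp
qed

lemma measurable_shift_path_space:
  "shift c \<in> measurable (path_space continuous_periodic) (path_space continuous_periodic)"
proof -
  have "(\<lambda>g s. g (s + c)) \<in> measurable (path_space continuous_periodic) cyl"
    unfolding cyl_def by (rule measurable_PiM_single') (auto simp: measurable_path_space_eval)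
  then have "shift c \<in> measurable (path_space continuous_periodic) cyl"
    by (simp add: shift_def[abs_def])
  then show ?thesis
    unfolding path_space_def
    by (intro measurable_restrict_space2)
      (auto simp: shift_continuous_periodic space_restrict_space path_space_def)
qed

lemma emeasure_gap_process:
  assumes y: "\<And>j. (\<lambda>\<omega>. y \<omega> j) \<in> borel_measurable M"
    and B: "B \<in> sets (path_space continuous_periodic)"
  shows "emeasure (gap_process M y) B
       = (\<integral>\<^sup>+\<omega>. \<integral>\<^sup>+u. indicator B (phase_shifted_path y (\<omega>, u)) \<partial>uniform_phase \<partial>M)"
proof -
  note phase_measurable = measurable_phase_shifted_path[of y, OF y]
  interpret U: prob_space uniform_phase by (rule prob_space_uniform_phase)
  have indicator_measurable:
    "(\<lambda>z. indicator B (phase_shifted_path y z) :: ennreal) \<in> borel_measurable (M \<Otimes>\<^sub>M uniform_phase)"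
    using phase_measurable B by measurable
  have "emeasure (gap_process M y) B =
      emeasure (M \<Otimes>\<^sub>M uniform_phase) (phase_shifted_path y -` B \<inter> space (M \<Otimes>\<^sub>M uniform_phase))"
    unfolding gap_process_def by (rule emeasure_distr[OF phase_measurable B])
  also have "\<dots> = (\<integral>\<^sup>+z. indicator B (phase_shifted_path y z) \<partial>(M \<Otimes>\<^sub>M uniform_phase))"
    using measurable_sets[OF phase_measurable B]
    by (simp add: nn_integral_indicator[symmetric] indicator_def cong: nn_integral_cong)
  also have "\<dots> = (\<integral>\<^sup>+\<omega>. \<integral>\<^sup>+u. indicator B (phase_shifted_path y (\<omega>, u)) \<partial>uniform_phase \<partial>M)"
    by (rule U.nn_integral_fst[OF indicator_measurable, symmetric])
  finally show ?thesis .
qed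

lemma shift_phase_shifted_path:
  "shift c (phase_shifted_path y (\<omega>, u)) = phase_shifted_path y (\<omega>, frac (u + c))"
proof -
  have "s + (u + c) = (s + frac (u + c)) + of_int \<lfloor>u + c\<rfloor>" for s
    by (simp add: frac_def)
  then have "gap_function (y \<omega>) (s + (u + c)) = gap_function (y \<omega>) (s + frac (u + c))" for s
    by (metis gap_function_add_int)
  then show ?thesis by (simp add: phase_shifted_path_def shift_def ac_simps)
qed

lemma distr_shift_gap_process:
  assumes y: "\<And>j. (\<lambda>\<omega>. y \<omega> j) \<in> borel_measurable M"
  shows "distr (gap_process M y) (gap_process M y) (shift c) = gap_process M y"
proof (rule measure_eqI)
  show "sets (distr (gap_process M y) (gap_process M y) (shift c)) = sets (gap_process M y)" by simp
  fix B assume "B \<in> sets (distr (gap_process M y) (gap_process M y) (shift c))"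
  then have B: "B \<in> sets (path_space continuous_periodic)" by (simp add: gap_process_def)
  have shift_B: "shift c -` B \<inter> continuous_periodic \<in> sets (path_space continuous_periodic)"
    using measurable_sets[OF measurable_shift_path_space B] by (simp add: space_path_space)
  have [measurable]: "(\<lambda>u. indicator B (phase_shifted_path y (\<omega>, u)) :: ennreal) \<in> borel_measurable borel"
    if "\<omega> \<in> space M" for \<omega>
    using measurable_Pair2[OF measurable_phase_shifted_path[of y, OF y] that] B
    by (simp cong: measurable_cong_sets)
  have "emeasure (distr (gap_process M y) (gap_process M y) (shift c)) B =
      emeasure (gap_process M y) (shift c -` B \<inter> continuous_periodic)"
    using measurable_shift_path_space B
    by (simp add: emeasure_distr gap_process_def space_path_space cong: measurable_cong_sets)
  also have "\<dots> = (\<integral>\<^sup>+\<omega>. \<integral>\<^sup>+u. indicator B (phase_shifted_path y (\<omega>, frac (u + c))) \<partial>uniform_phase \<partial>M)"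
    by (simp add: emeasure_gap_process[OF y shift_B] indicator_def shift_phase_shifted_path[symmetric]
        phase_shifted_path_continuous_periodic)
  also have "\<dots> = (\<integral>\<^sup>+\<omega>. \<integral>\<^sup>+u. indicator B (phase_shifted_path y (\<omega>, u)) \<partial>uniform_phase \<partial>M)"
    by (intro nn_integral_cong nn_integral_uniform_phase_frac_add) simp
  also have "\<dots> = emeasure (gap_process M y) B"
    by (rule emeasure_gap_process[OF y B, symmetric])
  finally show "emeasure (distr (gap_process M y) (gap_process M y) (shift c)) B = emeasure (gap_process M y) B" .
qed

lemma periodic_stationary_gap_process:
  assumes y: "\<And>j. (\<lambda>\<omega>. y \<omega> j) \<in> borel_measurable M" and "prob_space M"
  shows "periodic_stationary continuous_periodic (gap_process M y)"
proof -
  interpret M: prob_space M by fact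
  interpret U: prob_space uniform_phase by (rule prob_space_uniform_phase)
  interpret MU: pair_prob_space M uniform_phase by unfold_locales
  have "prob_space (gap_process M y)"
    unfolding gap_process_def by (rule MU.prob_space_distr[OF measurable_phase_shifted_path[of y, OF y]])
  moreover have "shift_invariant continuous_periodic"
    by (simp add: shift_invariant_def shift_continuous_periodic)
  ultimately show ?thesis
    unfolding periodic_stationary_def using distr_shift_gap_process[OF y]
    by (simp add: continuous_periodic_def gap_process_def)
qed

section \<open>The law of the first zero\<close>

lemma sets_ereal_image:
  assumes "A \<in> sets borel"
  shows "ereal ` A \<in> sets (borel :: ereal measure)"
proof -
  have "ereal ` A = real_of_ereal -` A - {\<infinity>, -\<infinity>}"
  proof (intro equalityI subsetI)
    fix x assume "x \<in> real_of_ereal -` A - {\<infinity>, -\<infinity>}"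
    then show "x \<in> ereal ` A" by (cases x) auto
  qed auto
  moreover have "real_of_ereal \<in> borel_measurable (borel :: ereal measure)"
    by measurable
  then have "real_of_ereal -` A \<in> sets (borel :: ereal measure)"
    using measurable_sets_borel assms by blast
  ultimately show ?thesis by auto
qed

lemma nn_integral_sum_tails:
  fixes y :: "'w \<Rightarrow> nat \<Rightarrow> real" and h :: "real \<Rightarrow> ennreal"
  assumes "prob_space M" and y: "\<And>j. (\<lambda>\<omega>. y \<omega> j) \<in> borel_measurable M"
    and [measurable]: "h \<in> borel_measurable borel" and h_nonpos: "\<And>t. t \<le> 0 \<Longrightarrow> h t = 0"
  shows "(\<integral>\<^sup>+\<omega>. \<integral>\<^sup>+t. h t * (\<Sum>j. indicator {0<..<y \<omega> j} t) \<partial>lborel \<partial>M) =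
         (\<integral>\<^sup>+t. h t * (\<Sum>j. emeasure M {\<omega>\<in>space M. t < y \<omega> j}) \<partial>lborel)"
proof -
  interpret M: prob_space M by fact
  interpret pair_sigma_finite M lborel by unfold_locales
  have [measurable]: "(\<lambda>\<omega>. y \<omega> j) \<in> borel_measurable M" for j by (fact y)
  have [measurable]: "(\<lambda>p. y (fst p) j) \<in> borel_measurable (M \<Otimes>\<^sub>M borel)" for j
    by (rule measurable_compose[OF measurable_fst y])
  have [measurable]: "Measurable.pred (M \<Otimes>\<^sub>M borel) (\<lambda>p. snd p \<in> {0<..<y (fst p) j})" for j
    unfolding greaterThanLessThan_iff by measurable
  have "(\<integral>\<^sup>+\<omega>. \<integral>\<^sup>+t. h t * (\<Sum>j. indicator {0<..<y \<omega> j} t) \<partial>lborel \<partial>M) =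
      (\<integral>\<^sup>+t. \<integral>\<^sup>+\<omega>. h t * (\<Sum>j. indicator {0<..<y \<omega> j} t) \<partial>M \<partial>lborel)"
    by (rule Fubini'[symmetric]) (unfold case_prod_beta, measurable)
  also have "\<dots> = (\<integral>\<^sup>+t. h t * (\<Sum>j. emeasure M {\<omega>\<in>space M. t < y \<omega> j}) \<partial>lborel)"
  proof (rule nn_integral_cong)
    fix t :: real
    show "(\<integral>\<^sup>+\<omega>. h t * (\<Sum>j. indicator {0<..<y \<omega> j} t) \<partial>M) =
        h t * (\<Sum>j. emeasure M {\<omega>\<in>space M. t < y \<omega> j})"
    proof (cases "0 < t")
      case True
      then have "(\<integral>\<^sup>+\<omega>. h t * (\<Sum>j. indicator {0<..<y \<omega> j} t) \<partial>M) =
          h t * (\<integral>\<^sup>+\<omega>. (\<Sum>j. indicator {\<omega>\<in>space M. t < y \<omega> j} \<omega>) \<partial>M)"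
        by (subst nn_integral_cmult[symmetric]) (auto simp: indicator_def intro!: nn_integral_cong)
      also have "\<dots> = h t * (\<Sum>j. emeasure M {\<omega>\<in>space M. t < y \<omega> j})"
        by (simp add: nn_integral_suminf nn_integral_indicator)
      finally show ?thesis .
    qed (simp add: h_nonpos)
  qed
  finally show ?thesis .
qed

lemma emeasure_first_zero_gap_process:
  assumes "prob_space M" and y: "\<And>j. (\<lambda>\<omega>. y \<omega> j) \<in> borel_measurable M"
    and gaps: "AE \<omega> in M. gap_sequence (y \<omega>)" and "0 < T"
    and A: "A \<subseteq> {0<..<T}" "A \<in> sets borel"
  shows "emeasure (distr (gap_process M y) borel (\<lambda>g. first_zero g 0 T)) (ereal ` A)
       = (\<integral>\<^sup>+t. indicator A t * (\<Sum>j. emeasure M {\<omega>\<in>space M. t < y \<omega> j}) \<partial>lborel)"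
proof -
  have [measurable]: "A \<in> sets borel" by (fact A(2))
  have first_zero_measurable: "(\<lambda>g. first_zero g 0 T) \<in> borel_measurable (gap_process M y)"
    using borel_measurable_first_zero[of continuous_periodic]
    by (simp add: continuous_periodic_def gap_process_def cong: measurable_cong_sets)
  define B where "B = (\<lambda>g. first_zero g 0 T) -` (ereal ` A) \<inter> continuous_periodic"
  have B: "B \<in> sets (path_space continuous_periodic)"
    using measurable_sets[OF first_zero_measurable sets_ereal_image[OF A(2)]]
    by (simp add: B_def gap_process_def space_path_space)
  have indicator_B: "indicator B (phase_shifted_path y (\<omega>, u)) =
      (indicator (ereal ` A) (first_zero (shift u (gap_function (y \<omega>))) 0 T) :: ennreal)" for \<omega> u
    using phase_shifted_path_continuous_periodic[of y "(\<omega>, u)"]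
    by (simp add: B_def phase_shifted_path_def indicator_def)
  have [measurable]: "(\<lambda>u. indicator B (phase_shifted_path y (\<omega>, u)) :: ennreal) \<in> borel_measurable borel"
    if "\<omega> \<in> space M" for \<omega>
    using measurable_Pair2[OF measurable_phase_shifted_path[of y, OF y] that] B
    by (simp cong: measurable_cong_sets)
  have "emeasure (distr (gap_process M y) borel (\<lambda>g. first_zero g 0 T)) (ereal ` A) =
      emeasure (gap_process M y) B"
    using first_zero_measurable sets_ereal_image[OF A(2)]
    by (simp add: emeasure_distr B_def gap_process_def space_path_space)
  also have "\<dots> = (\<integral>\<^sup>+\<omega>. \<integral>\<^sup>+u. indicator {0..<1} u *
      indicator (ereal ` A) (first_zero (shift u (gap_function (y \<omega>))) 0 T) \<partial>lborel \<partial>M)"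
    by (auto simp: emeasure_gap_process[OF y B] nn_integral_uniform_phase indicator_B[symmetric]
        intro!: nn_integral_cong)
  also have "\<dots> = (\<integral>\<^sup>+\<omega>. \<integral>\<^sup>+t. indicator A t * (\<Sum>j. indicator {0<..<y \<omega> j} t) \<partial>lborel \<partial>M)"
  proof (rule nn_integral_cong_AE)
    show "AE \<omega> in M. (\<integral>\<^sup>+u. indicator {0..<1} u *
          indicator (ereal ` A) (first_zero (shift u (gap_function (y \<omega>))) 0 T) \<partial>lborel) =
        (\<integral>\<^sup>+t. indicator A t * (\<Sum>j. indicator {0<..<y \<omega> j} t) \<partial>lborel)"
      using gaps by eventually_elim
        (use A \<open>0 < T\<close> in \<open>simp add: nn_integral_first_zero_shift_gap_function\<close>)
  qed
  also have "\<dots> = (\<integral>\<^sup>+t. indicator A t * (\<Sum>j. emeasure M {\<omega>\<in>space M. t < y \<omega> j}) \<partial>lborel)"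
    using A(1) by (intro nn_integral_sum_tails[OF \<open>prob_space M\<close> y]) (auto simp: indicator_def)
  finally show ?thesis .
qed

section \<open>Random vectors with the distribution functions F_i\<close>

lemma f0plus_eq_SUP:
  assumes "0 < T" and antimono: "antimono_on {0<..<T} f"
  shows "f0plus f = (SUP x\<in>{0<..<T}. ereal (f x))"
proof -
  let ?S = "SUP x\<in>{0<..<T}. ereal (f x)"
  have "((\<lambda>x. ereal (f x)) \<longlongrightarrow> ?S) (at_right 0)"
  proof (rule order_tendstoI)
    fix a assume "a < ?S"
    then obtain x0 where x0: "x0 \<in> {0<..<T}" "a < ereal (f x0)" by (auto simp: less_SUP_iff)
    have "eventually (\<lambda>x. x \<in> {0<..<x0}) (at_right 0)"
      using x0 by (intro eventually_at_right_real) auto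
    then show "eventually (\<lambda>x. a < ereal (f x)) (at_right 0)"
    proof (rule eventually_mono)
      fix x assume "x \<in> {0<..<x0}"
      then have "f x0 \<le> f x" using x0 by (intro monotone_onD[OF antimono]) auto
      then show "a < ereal (f x)" using x0(2) by (meson ereal_less_eq(3) less_le_trans)
    qed
  next
    fix a assume "?S < a"
    moreover have "eventually (\<lambda>x. x \<in> {0<..<T}) (at_right 0)"
      using \<open>0 < T\<close> by (intro eventually_at_right_real) auto
    ultimately show "eventually (\<lambda>x. ereal (f x) < a) (at_right 0)"
      by (elim eventually_mono) (meson SUP_upper le_less_trans)
  qed
  then show ?thesis unfolding f0plus_def by (intro tendsto_Lim) auto
qed

lemma le_N_of:
  assumes "0 < T" and antimono: "antimono_on {0<..<T} f"
    and "t \<in> {0<..<T}" and "N_of f = enat n"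
  shows "f t \<le> real n"
proof -
  have "f0plus f = (SUP x\<in>{0<..<T}. ereal (f x))"
    using f0plus_eq_SUP[OF assms(1) antimono] .
  moreover have "ereal (f t) \<le> (SUP x\<in>{0<..<T}. ereal (f x))" using assms(3) by (rule SUP_upper)
  ultimately have le: "ereal (f t) \<le> f0plus f" by simp
  show ?thesis
  proof (cases "f0plus f")
    case (real r)
    then have "n = nat \<lceil>r\<rceil>" using assms(4) by (simp add: N_of_def)
    moreover have "f t \<le> r" using le real by simp
    ultimately show ?thesis by linarith
  qed (use assms(4) in \<open>simp_all add: N_of_def\<close>)
qed

text \<open>The j-th summand is the length of \<open>[0, a] \<inter> [j, j + 1)\<close>.\<close>

lemma sum_unit_layers: "0 \<le> a \<Longrightarrow> (\<Sum>j<n. min (max (a - real j) 0) 1) = min a (real n)"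
  by (induction n) (auto simp: min_def max_def)

lemma suminf_unit_layers:
  assumes "0 \<le> a"
  shows "(\<Sum>j. ennreal (min (max (a - real j) 0) 1)) = ennreal a"
proof -
  define K where "K = nat \<lceil>a\<rceil>"
  have K: "a \<le> real K" unfolding K_def by linarith
  have "(\<Sum>j. ennreal (min (max (a - real j) 0) 1)) = (\<Sum>j<K. ennreal (min (max (a - real j) 0) 1))"
    using K by (intro suminf_finite) auto
  also have "\<dots> = ennreal a"
    using sum_unit_layers[OF assms, of K] K by (simp add: sum_ennreal)
  finally show ?thesis .
qed

text \<open>The random vector as a 0-indexed sequence: entry j is \<open>X (j + 1)\<close>, and 0 beyond N.\<close>

definition zero_padded :: "enat \<Rightarrow> (nat \<Rightarrow> 'w \<Rightarrow> real) \<Rightarrow> 'w \<Rightarrow> nat \<Rightarrow> real" where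
  "zero_padded N X \<omega> j = (if enat (Suc j) \<le> N then X (Suc j) \<omega> else 0)"

lemma measurable_zero_padded:
  "rv_with_cdfs M X N Fs \<Longrightarrow> (\<lambda>\<omega>. zero_padded N X \<omega> j) \<in> borel_measurable M"
  by (cases "enat (Suc j) \<le> N") (auto simp: rv_with_cdfs_def zero_padded_def)

lemma emeasure_zero_padded_greater:
  assumes rv: "rv_with_cdfs M X N (Fcdf T f)" and "0 < t"
    and N: "\<And>n. N = enat n \<Longrightarrow> t < T \<Longrightarrow> f t \<le> real n"
  shows "emeasure M {\<omega>\<in>space M. t < zero_padded N X \<omega> j} =
    ennreal (if t < T then min (max (f t - real j) 0) 1 else 0)"
proof (cases "enat (Suc j) \<le> N")
  case True
  interpret M: prob_space M using rv by (simp add: rv_with_cdfs_def)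
  have [measurable]: "X (Suc j) \<in> borel_measurable M"
    and cdf: "measure M {\<omega>\<in>space M. X (Suc j) \<omega> \<le> t} = Fcdf T f (Suc j) t"
    using rv True by (auto simp: rv_with_cdfs_def)
  have "{\<omega>\<in>space M. t < zero_padded N X \<omega> j} = space M - {\<omega>\<in>space M. X (Suc j) \<omega> \<le> t}"
    using True by (auto simp: zero_padded_def)
  then have "emeasure M {\<omega>\<in>space M. t < zero_padded N X \<omega> j} = ennreal (1 - Fcdf T f (Suc j) t)"
    using M.prob_compl[of "{\<omega>\<in>space M. X (Suc j) \<omega> \<le> t}"] cdf by (simp add: M.emeasure_eq_measure)
  also have "1 - Fcdf T f (Suc j) t = (if t < T then min (max (f t - real j) 0) 1 else 0)"
    using \<open>0 < t\<close> by (auto simp: Fcdf_def fext_def min_def max_def)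
  finally show ?thesis .
next
  case False
  then obtain n where n: "N = enat n" "n \<le> j" by (cases N) auto
  then have "t < T \<Longrightarrow> f t - real j \<le> 0" using N by force
  moreover have empty: "{\<omega>\<in>space M. t < zero_padded N X \<omega> j} = {}"
    using False \<open>0 < t\<close> by (auto simp: zero_padded_def)
  ultimately show ?thesis unfolding empty by (simp add: min_def max_def)
qed

lemma suminf_emeasure_zero_padded_greater:
  assumes "0 < T" and antimono: "antimono_on {0<..<T} f"
    and nonneg: "\<forall>x\<in>{0<..<T}. 0 \<le> f x"
    and rv: "rv_with_cdfs M X (N_of f) (Fcdf T f)" and "0 < t"
  shows "(\<Sum>j. emeasure M {\<omega>\<in>space M. t < zero_padded (N_of f) X \<omega> j}) =
    ennreal (if t < T then f t else 0)"
proof -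
  have layers: "emeasure M {\<omega>\<in>space M. t < zero_padded (N_of f) X \<omega> j} =
      ennreal (if t < T then min (max (f t - real j) 0) 1 else 0)" for j
    using le_N_of[OF \<open>0 < T\<close> antimono] \<open>0 < t\<close>
    by (intro emeasure_zero_padded_greater[OF rv]) auto
  show ?thesis
  proof (cases "t < T")
    case True
    have "(\<Sum>j. emeasure M {\<omega>\<in>space M. t < zero_padded (N_of f) X \<omega> j}) =
        (\<Sum>j. ennreal (min (max (f t - real j) 0) 1))"
      by (simp only: layers True if_True)
    also have "\<dots> = ennreal (f t)"
      using nonneg \<open>0 < t\<close> True by (intro suminf_unit_layers) simp
    finally show ?thesis using True by simp
  qed (simp add: layers)
qed

lemma AE_zero_padded_nonneg:
  assumes rv: "rv_with_cdfs M X N (Fcdf T f)"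
  shows "AE \<omega> in M. \<forall>j. 0 \<le> zero_padded N X \<omega> j"
proof -
  interpret M: prob_space M using rv by (simp add: rv_with_cdfs_def)
  have "AE \<omega> in M. 0 \<le> zero_padded N X \<omega> j" for j
  proof (cases "enat (Suc j) \<le> N")
    case True
    have [measurable]: "X (Suc j) \<in> borel_measurable M"
      and cdf: "measure M {\<omega>\<in>space M. X (Suc j) \<omega> \<le> 0} = Fcdf T f (Suc j) 0"
      using rv True by (auto simp: rv_with_cdfs_def)
    have "emeasure M {\<omega>\<in>space M. X (Suc j) \<omega> \<le> 0} = 0"
      using cdf by (simp add: M.emeasure_eq_measure Fcdf_def)
    then have "AE \<omega> in M. \<not> X (Suc j) \<omega> \<le> 0"
      by (intro AE_I[where N = "{\<omega>\<in>space M. X (Suc j) \<omega> \<le> 0}"]) auto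
    then show ?thesis using True by (auto simp: zero_padded_def)
  qed (simp add: zero_padded_def)
  then show ?thesis by (simp add: AE_all_countable)
qed

lemma sum_zero_padded:
  "(\<Sum>j<n. zero_padded (enat n) X \<omega> j) = (\<Sum>i=1..n. X i \<omega>)"
proof -
  have "(\<Sum>j<n. zero_padded (enat n) X \<omega> j) = (\<Sum>j<n. X (Suc j) \<omega>)"
    by (intro sum.cong) (auto simp: zero_padded_def)
  also have "\<dots> = (\<Sum>i=1..n. X i \<omega>)"
    by (induction n) auto
  finally show ?thesis .
qed

lemma gap_sequence_zero_padded:
  assumes nonneg: "\<forall>j. 0 \<le> zero_padded N X \<omega> j" and "sum_le1 N X \<omega>"
  shows "gap_sequence (zero_padded N X \<omega>)"
  unfolding gap_sequence_def
proof (intro conjI allI)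
  fix n
  show "psum (zero_padded N X \<omega>) n \<le> 1"
  proof (cases N)
    case (enat m)
    have "psum (zero_padded N X \<omega>) n \<le> (\<Sum>j<max n m. zero_padded N X \<omega> j)"
      unfolding psum_def using nonneg by (intro sum_mono2) auto
    also have "\<dots> = (\<Sum>j<m. zero_padded N X \<omega> j)"
      by (rule sum.mono_neutral_right) (auto simp: zero_padded_def enat)
    also have "\<dots> \<le> 1"
      using \<open>sum_le1 N X \<omega>\<close> by (simp add: enat sum_le1_def sum_zero_padded)
    finally show ?thesis .
  next
    case infinity
    then have "summable (\<lambda>i. X (Suc i) \<omega>)" "(\<Sum>i. X (Suc i) \<omega>) \<le> 1"
      and padded: "zero_padded N X \<omega> j = X (Suc j) \<omega>" for j
      using \<open>sum_le1 N X \<omega>\<close> by (auto simp: sum_le1_def zero_padded_def)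
    then show ?thesis
      using nonneg sum_le_suminf[of "\<lambda>i. X (Suc i) \<omega>" "{..<n}"]
      by (simp add: psum_def padded)
  qed
qed (use nonneg in simp)

lemma suminf_zero_padded:
  assumes nonneg: "\<forall>j. 0 \<le> zero_padded N X \<omega> j" and "sum_eq N X \<omega> C"
  shows "(\<Sum>j. ennreal (zero_padded N X \<omega> j)) = ennreal C"
proof (cases N)
  case (enat n)
  have "(\<Sum>j. ennreal (zero_padded N X \<omega> j)) = (\<Sum>j<n. ennreal (zero_padded N X \<omega> j))"
    by (rule suminf_finite) (auto simp: zero_padded_def enat)
  also have "\<dots> = ennreal C"
    using nonneg \<open>sum_eq N X \<omega> C\<close> by (simp add: sum_ennreal enat sum_eq_def sum_zero_padded)
  finally show ?thesis .
next
  case infinity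
  then have padded: "zero_padded N X \<omega> j = X (Suc j) \<omega>" for j by (simp add: zero_padded_def)
  have sums: "(\<lambda>i. X (Suc i) \<omega>) sums C" using \<open>sum_eq N X \<omega> C\<close> infinity by (simp add: sum_eq_def)
  then have "(\<Sum>j. ennreal (X (Suc j) \<omega>)) = ennreal C"
    using nonneg by (subst suminf_ennreal2) (auto simp: padded sums_summable sums_unique[symmetric])
  then show ?thesis by (simp add: padded)
qed

lemma sum_le1_if_sum_eq: "sum_eq N X \<omega> C \<Longrightarrow> C \<le> 1 \<Longrightarrow> sum_le1 N X \<omega>"
  by (cases N) (auto simp: sum_eq_def sum_le1_def sums_summable sums_unique[symmetric])

lemma in_d_IMT_if_sum_le1:
  assumes "0 < T" and antimono: "antimono_on {0<..<T} f"
    and nonneg: "\<forall>x\<in>{0<..<T}. 0 \<le> f x"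
    and rv: "rv_with_cdfs M X (N_of f) (Fcdf T f)" and le1: "AE \<omega> in M. sum_le1 (N_of f) X \<omega>"
  shows "in_d T (IMT T) f"
proof -
  define y where "y = zero_padded (N_of f) X"
  have "prob_space M" using rv by (simp add: rv_with_cdfs_def)
  have y: "(\<lambda>\<omega>. y \<omega> j) \<in> borel_measurable M" for j
    unfolding y_def by (rule measurable_zero_padded[OF rv])
  have gaps: "AE \<omega> in M. gap_sequence (y \<omega>)"
    using AE_zero_padded_nonneg[OF rv] le1 by eventually_elim (simp add: y_def gap_sequence_zero_padded)
  define F where "F = distr (gap_process M y) borel (\<lambda>g. first_zero g 0 T)"
  have "F \<in> IMT T"
    unfolding IMT_def
  proof (intro CollectI exI conjI)
    show "shift_invariant continuous_periodic"
      by (simp add: shift_invariant_def shift_continuous_periodic)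
    show "\<forall>g\<in>continuous_periodic. period1 g" by (simp add: continuous_periodic_def)
    show "periodic_stationary continuous_periodic (gap_process M y)"
      by (rule periodic_stationary_gap_process[OF y \<open>prob_space M\<close>])
  qed (auto simp: F_def first_time_first_zero)
  moreover have "emeasure F (ereal ` A) = (\<integral>\<^sup>+x. ennreal (f x) * indicator A x \<partial>lborel)"
    if A: "A \<in> sets borel" "A \<subseteq> {0<..<T}" for A
  proof -
    have "emeasure F (ereal ` A) =
        (\<integral>\<^sup>+t. indicator A t * (\<Sum>j. emeasure M {\<omega>\<in>space M. t < y \<omega> j}) \<partial>lborel)"
      unfolding F_def by (rule emeasure_first_zero_gap_process[OF \<open>prob_space M\<close> y gaps \<open>0 < T\<close> A(2,1)])
    also have "\<dots> = (\<integral>\<^sup>+x. ennreal (f x) * indicator A x \<partial>lborel)"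
      using A(2) suminf_emeasure_zero_padded_greater[OF \<open>0 < T\<close> antimono nonneg rv]
      by (intro nn_integral_cong) (auto simp: y_def indicator_def)
    finally show ?thesis .
  qed
  then have "density_on T F f"
    using nonneg by (simp add: density_on_def)
  ultimately show ?thesis by (auto simp: in_d_def)
qed

lemma nn_integral_suminf_zero_padded:
  assumes "0 < T" and antimono: "antimono_on {0<..<T} f"
    and nonneg: "\<forall>x\<in>{0<..<T}. 0 \<le> f x"
    and rv: "rv_with_cdfs M X (N_of f) (Fcdf T f)"
  shows "(\<integral>\<^sup>+\<omega>. (\<Sum>j. ennreal (zero_padded (N_of f) X \<omega> j)) \<partial>M) =
    (\<integral>\<^sup>+t. ennreal (f t) * indicator {0<..<T} t \<partial>lborel)"
proof -
  define y where "y = zero_padded (N_of f) X"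
  have "prob_space M" using rv by (simp add: rv_with_cdfs_def)
  have y: "(\<lambda>\<omega>. y \<omega> j) \<in> borel_measurable M" for j
    unfolding y_def by (rule measurable_zero_padded[OF rv])
  have "AE \<omega> in M. (\<Sum>j. ennreal (y \<omega> j)) =
      (\<integral>\<^sup>+t. indicator {0<..} t * (\<Sum>j. indicator {0<..<y \<omega> j} t) \<partial>lborel)"
    using AE_zero_padded_nonneg[OF rv]
  proof eventually_elim
    case (elim \<omega>)
    have "(\<integral>\<^sup>+t. indicator {0<..} t * (\<Sum>j. indicator {0<..<y \<omega> j} t) \<partial>lborel) =
        (\<Sum>j. \<integral>\<^sup>+t. indicator {0<..<y \<omega> j} t \<partial>lborel)"
      by (subst nn_integral_suminf[symmetric]) (auto simp: indicator_def intro!: nn_integral_cong)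
    then show ?case using elim by (simp add: y_def)
  qed
  then have "(\<integral>\<^sup>+\<omega>. (\<Sum>j. ennreal (y \<omega> j)) \<partial>M) =
      (\<integral>\<^sup>+\<omega>. \<integral>\<^sup>+t. indicator {0<..} t * (\<Sum>j. indicator {0<..<y \<omega> j} t) \<partial>lborel \<partial>M)"
    by (rule nn_integral_cong_AE)
  also have "\<dots> = (\<integral>\<^sup>+t. indicator {0<..} t * (\<Sum>j. emeasure M {\<omega>\<in>space M. t < y \<omega> j}) \<partial>lborel)"
    by (rule nn_integral_sum_tails[OF \<open>prob_space M\<close> y]) auto
  also have "\<dots> = (\<integral>\<^sup>+t. ennreal (f t) * indicator {0<..<T} t \<partial>lborel)"
    using suminf_emeasure_zero_padded_greater[OF \<open>0 < T\<close> antimono nonneg rv]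
    by (intro nn_integral_cong) (auto simp: y_def indicator_def)
  finally show ?thesis by (simp add: y_def)
qed

lemma AE_sum_le1_if_mixing:
  assumes "0 < T" and antimono: "antimono_on {0<..<T} f"
    and F: "prob_space F" "density_on T F f"
    and mix: "mixing_vector M X (N_of f) (Fcdf T f)"
  shows "AE \<omega> in M. sum_le1 (N_of f) X \<omega>"
proof -
  have rv: "rv_with_cdfs M X (N_of f) (Fcdf T f)" using mix by (simp add: mixing_vector_def)
  obtain C where C: "AE \<omega> in M. sum_eq (N_of f) X \<omega> C" using mix by (auto simp: mixing_vector_def)
  interpret M: prob_space M using rv by (simp add: rv_with_cdfs_def)
  have nonneg: "\<forall>x\<in>{0<..<T}. 0 \<le> f x" using F(2) by (simp add: density_on_def)
  have "AE \<omega> in M. (\<Sum>j. ennreal (zero_padded (N_of f) X \<omega> j)) = ennreal C"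
    using AE_zero_padded_nonneg[OF rv] C by eventually_elim (rule suminf_zero_padded)
  then have "ennreal C = (\<integral>\<^sup>+\<omega>. (\<Sum>j. ennreal (zero_padded (N_of f) X \<omega> j)) \<partial>M)"
    by (simp add: nn_integral_cong_AE M.emeasure_space_1)
  also have "\<dots> = (\<integral>\<^sup>+t. ennreal (f t) * indicator {0<..<T} t \<partial>lborel)"
    by (rule nn_integral_suminf_zero_padded[OF \<open>0 < T\<close> antimono nonneg rv])
  also have "\<dots> = emeasure F (ereal ` {0<..<T})"
    using F(2) by (simp add: density_on_def)
  also have "\<dots> \<le> 1"
    using F(1) by (rule prob_space.emeasure_le_1)
  finally have "C \<le> 1"
    by (cases "C < 0") (simp_all add: ennreal_le_1)
  with C show ?thesis by (auto elim!: eventually_mono intro: sum_le1_if_sum_eq)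
qed

theorem mainTheorem13:
  fixes T :: real and f :: "real \<Rightarrow> real"
  assumes "0 < T" and "T \<le> 1"
    and "in_d T (AMT T) f"
    and "cadlag_noninc T f"
  shows "((\<exists>(M :: 'w measure) X. rv_with_cdfs M X (N_of f) (Fcdf T f) \<and>
                                  (AE \<omega> in M. sum_le1 (N_of f) X \<omega>))
          \<or> (\<exists>(M :: 'v measure) X. mixing_vector M X (N_of f) (Fcdf T f)))
         \<longrightarrow> in_d T (IMT T) f"
proof
  have antimono: "antimono_on {0<..<T} f"
    using assms(4) by (auto simp: cadlag_noninc_def monotone_on_def)
  obtain F where F: "F \<in> AMT T" "density_on T F f" using assms(3) by (auto simp: in_d_def)
  then have "prob_space F" by (simp add: AMT_def distribution_on_def)
  have nonneg: "\<forall>x\<in>{0<..<T}. 0 \<le> f x" using F(2) by (simp add: density_on_def)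
  assume "(\<exists>(M :: 'w measure) X. rv_with_cdfs M X (N_of f) (Fcdf T f) \<and>
                                  (AE \<omega> in M. sum_le1 (N_of f) X \<omega>))
          \<or> (\<exists>(M :: 'v measure) X. mixing_vector M X (N_of f) (Fcdf T f))"
  then show "in_d T (IMT T) f"
  proof (elim disjE exE conjE)
    fix M :: "'w measure" and X
    assume "rv_with_cdfs M X (N_of f) (Fcdf T f)" "AE \<omega> in M. sum_le1 (N_of f) X \<omega>"
    then show ?thesis by (rule in_d_IMT_if_sum_le1[OF \<open>0 < T\<close> antimono nonneg])
  next
    fix M :: "'v measure" and X
    assume mix: "mixing_vector M X (N_of f) (Fcdf T f)"
    then have "rv_with_cdfs M X (N_of f) (Fcdf T f)" by (simp add: mixing_vector_def)
    moreover have "AE \<omega> in M. sum_le1 (N_of f) X \<omega>"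
      by (rule AE_sum_le1_if_mixing[OF \<open>0 < T\<close> antimono \<open>prob_space F\<close> F(2) mix])
    ultimately show ?thesis by (rule in_d_IMT_if_sum_le1[OF \<open>0 < T\<close> antimono nonneg])
  qed
qed

end
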